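(* Let $k\geq 3$ and let $p$ be the POP of length $k$ defined by the single relation $1>k$ (labels $2,\ldots,k-1$ isolated). Then for every $n\geq 0$, the number of $n$-permutations avoiding $p$ equals the number of $n$-permutations $\sigma$ such that, for every cycle $c$ of $\sigma$ (in its disjoint cycle decomposition), $\max(c)-\min(c)\leq k-2$, i.e. the smallest integer interval containing all elements of $c$ has at most $k-1$ elements.
   Context: An $n$-permutation is a word $\pi=\pi_1\cdots\pi_n$ containing each of $1,\ldots,n$ exactly once (equivalently a bijection of $\{1,\ldots,n\}$, which has a decomposition into disjoint cycles). A partially ordered pattern (POP) $p$ of length $k$ is a partial order on the label set $\{1,\ldots,k\}$; it is described by a set of generating relations, where a relation $x>y$ means that in an occurrence the entry in the $x$-th chosen position must be larger than the entry in the $y$-th chosen position, and labels not involved in any relation are unconstrained. An $n$-permutation $\pi$ contains $p$ if there are indices $1\leq i_1<\cdots<i_k\leq n$ such that $\pi_{i_x}>\pi_{i_y}$ whenever $x>y$ in the partial order; otherwise $\pi$ avoids $p$. *)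

theory Defs
  imports Main "HOL-Combinatorics.Permutations" "HOL-Combinatorics.Orbits"
begin

text \<open>An n-permutation pi = pi_1 ... pi_n is represented by a function
  f with f permutes {1..n}, pi_i = f i.
  A POP of length k is given by a set P of generating relations (x,y),
  meaning label x > label y, with labels in {1..k}.\<close>

definition pop_contains :: "nat \<Rightarrow> (nat \<Rightarrow> nat) \<Rightarrow> nat \<Rightarrow> (nat \<times> nat) set \<Rightarrow> bool" where
  "pop_contains n f k P \<longleftrightarrow>
     (\<exists>idx :: nat \<Rightarrow> nat. strict_mono_on {1..k} idx \<and> idx ` {1..k} \<subseteq> {1..n} \<and>
        (\<forall>(x, y) \<in> P. f (idx x) > f (idx y)))"

definition pop_avoids :: "nat \<Rightarrow> (nat \<Rightarrow> nat) \<Rightarrow> nat \<Rightarrow> (nat \<times> nat) set \<Rightarrow> bool" where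
  "pop_avoids n f k P \<longleftrightarrow> \<not> pop_contains n f k P"

definition cycles_span_le :: "nat \<Rightarrow> (nat \<Rightarrow> nat) \<Rightarrow> nat \<Rightarrow> bool" where
  "cycles_span_le n \<sigma> d \<longleftrightarrow>
     (\<forall>x \<in> {1..n}. Max (orbit \<sigma> x) - Min (orbit \<sigma> x) \<le> d)"

end

theory Submission
  imports Defs
begin

text \<open>Write u = f\<inverse>, a permutation of {1..n}, as the word u 1 ... u n and cut it after every
  right-to-left minimum. Each block ends with its smallest letter, which is also smaller than all
  later letters; reading every block as a cycle gives a permutation of {1..n}. This is a bijection:
  the word is recovered letter by letter, since a block starts with the image of the smallest
  letter not used so far. A block cycle has span at most d exactly when no letter of the block
  exceeds its last letter by more than d, and letters of later blocks are larger anyway, so all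
  cycles have span at most d iff u a \<le> u b + d whenever a < b. For d = k - 2 this says that no
  two positions i + (k - 1) \<le> j of f satisfy f j < f i, i.e. that f avoids the pattern 1 > k.\<close>

definition rl_min :: "(nat \<Rightarrow> nat) \<Rightarrow> nat \<Rightarrow> nat \<Rightarrow> bool" where
  "rl_min u n j \<longleftrightarrow> (\<forall>i. j < i \<and> i \<le> n \<longrightarrow> u j < u i)"

text \<open>The value is 0 when there is no right-to-left minimum before j, so that the block ending at
  a right-to-left minimum e is always {prev_rl_min u n e + 1..e}.\<close>

definition prev_rl_min :: "(nat \<Rightarrow> nat) \<Rightarrow> nat \<Rightarrow> nat \<Rightarrow> nat" where
  "prev_rl_min u n j = Max (insert 0 ({1..<j} \<inter> Collect (rl_min u n)))"

definition block_succ :: "(nat \<Rightarrow> nat) \<Rightarrow> nat \<Rightarrow> nat \<Rightarrow> nat" where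
  "block_succ u n j = (if rl_min u n j then prev_rl_min u n j + 1 else j + 1)"

definition block_cycles :: "(nat \<Rightarrow> nat) \<Rightarrow> nat \<Rightarrow> nat \<Rightarrow> nat" where
  "block_cycles u n x = (if x \<in> {1..n} then u (block_succ u n (inv u x)) else x)"

definition block :: "(nat \<Rightarrow> nat) \<Rightarrow> nat \<Rightarrow> nat \<Rightarrow> nat set" where
  "block u n e = {q. 1 \<le> q \<and> q \<le> e \<and> (\<forall>r. q \<le> r \<and> r < e \<longrightarrow> \<not> rl_min u n r)}"

definition bounded_drops :: "(nat \<Rightarrow> nat) \<Rightarrow> nat \<Rightarrow> nat \<Rightarrow> bool" where
  "bounded_drops u n d \<longleftrightarrow> (\<forall>a\<in>{1..n}. \<forall>b\<in>{1..n}. a < b \<longrightarrow> u a \<le> u b + d)"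

lemma rl_min_last: "rl_min u n n"
  by (auto simp: rl_min_def)

lemma prev_rl_min_less: "1 \<le> j \<Longrightarrow> prev_rl_min u n j < j"
  unfolding prev_rl_min_def by (subst Max_less_iff) auto

lemma rl_min_le_prev_rl_min: "1 \<le> r \<Longrightarrow> r < j \<Longrightarrow> rl_min u n r \<Longrightarrow> r \<le> prev_rl_min u n j"
  unfolding prev_rl_min_def by (intro Max_ge) auto

lemma prev_rl_min_cases:
  "prev_rl_min u n j = 0 \<or>
     1 \<le> prev_rl_min u n j \<and> prev_rl_min u n j < j \<and> rl_min u n (prev_rl_min u n j)"
proof -
  have "prev_rl_min u n j \<in> insert 0 ({1..<j} \<inter> Collect (rl_min u n))"
    unfolding prev_rl_min_def by (intro Max_in) auto
  then show ?thesis by auto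
qed

lemma not_rl_min_after_prev: "prev_rl_min u n j < r \<Longrightarrow> r < j \<Longrightarrow> \<not> rl_min u n r"
  using rl_min_le_prev_rl_min[of r j u n] by (cases "r = 0") auto

lemma ex_rl_min_argmin:
  assumes u: "u permutes {1..n}" and j: "1 \<le> j" "j \<le> n"
  obtains m where "m \<in> {j..n}" "rl_min u n m" "\<And>i. i \<in> {j..n} \<Longrightarrow> u m \<le> u i"
proof -
  obtain m where m: "m \<in> {j..n}" "u m = Min (u ` {j..n})"
    using Min_in[of "u ` {j..n}"] j by fastforce
  have le: "u m \<le> u i" if "i \<in> {j..n}" for i
    using m(2) that by simp
  have "rl_min u n m"
    unfolding rl_min_def
  proof (intro allI impI)
    fix i assume i: "m < i \<and> i \<le> n"
    have "u m \<noteq> u i"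
      using inj_onD[OF permutes_inj_on[OF u], of m i] m i j by auto
    moreover have "u m \<le> u i"
      using le[of i] m i by simp
    ultimately show "u m < u i"
      by simp
  qed
  then show thesis
    using that m le by blast
qed

lemma ex_next_rl_min:
  assumes "j \<le> n"
  obtains e where "j \<le> e" "e \<le> n" "rl_min u n e" "\<forall>r. j \<le> r \<and> r < e \<longrightarrow> \<not> rl_min u n r"
proof -
  define P where "P = (\<lambda>r. j \<le> r \<and> r \<le> n \<and> rl_min u n r)"
  have "P n"
    using assms rl_min_last unfolding P_def by auto
  then have "P (Least P)"
    by (rule LeastI)
  moreover have "\<not> rl_min u n r" if "j \<le> r" "r < Least P" for r
    using not_less_Least[OF \<open>r < Least P\<close>] that \<open>P (Least P)\<close> unfolding P_def by auto
  ultimately show thesis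
    using that unfolding P_def by blast
qed

subsection \<open>Blocks read as cycles\<close>

lemma block_succ_in: "j \<in> {1..n} \<Longrightarrow> block_succ u n j \<in> {1..n}"
  using prev_rl_min_less[of j u n] rl_min_last[of u n]
  by (cases "j = n") (auto simp: block_succ_def)

lemma inj_on_block_succ: "inj_on (block_succ u n) {1..n}"
proof (rule inj_onI)
  fix x y assume x: "x \<in> {1..n}" and y: "y \<in> {1..n}" and eq: "block_succ u n x = block_succ u n y"
  have mixed: "block_succ u n a \<noteq> block_succ u n b" if "b \<in> {1..n}" "rl_min u n a" "\<not> rl_min u n b" for a b
    using prev_rl_min_cases[of u n a] that by (auto simp: block_succ_def)
  have mono: "prev_rl_min u n a < prev_rl_min u n b"
    if "a \<in> {1..n}" "rl_min u n a" "a < b" for a b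
    using prev_rl_min_less[of a u n] rl_min_le_prev_rl_min[of a b u n] that by auto
  show "x = y"
  proof (cases "rl_min u n x"; cases "rl_min u n y")
    assume "rl_min u n x" "rl_min u n y"
    then show ?thesis
      using mono[OF x, of y] mono[OF y, of x] eq by (simp add: block_succ_def) (metis linorder_neqE_nat)
  qed (use mixed x y eq in \<open>auto simp: block_succ_def\<close>)
qed

lemma bij_betw_block_succ: "bij_betw (block_succ u n) {1..n} {1..n}"
  unfolding bij_betw_def using inj_on_block_succ block_succ_in endo_inj_surj[of "{1..n}" "block_succ u n"]
  by blast

lemma block_cycles_permutes:
  assumes u: "u permutes {1..n}"
  shows "block_cycles u n permutes {1..n}"
proof (rule bij_imp_permutes)
  have "bij_betw (u \<circ> (block_succ u n \<circ> inv u)) {1..n} {1..n}"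
    by (intro bij_betw_trans[OF _ permutes_imp_bij[OF u]]
        bij_betw_trans[OF permutes_imp_bij[OF permutes_inv[OF u]]] bij_betw_block_succ)
  then show "bij_betw (block_cycles u n) {1..n} {1..n}"
    by (rule bij_betw_cong[THEN iffD1, rotated]) (auto simp: block_cycles_def)
qed (auto simp: block_cycles_def)

lemma block_cycles_apply:
  assumes u: "u permutes {1..n}" and p: "p \<in> {1..n}"
  shows "block_cycles u n (u p) = u (block_succ u n p)"
  using permutes_in_image[OF u, of p] p permutes_inverses(2)[OF u] by (simp add: block_cycles_def)

lemma block_min:
  assumes u: "u permutes {1..n}" and e: "e \<le> n" "rl_min u n e" and "q \<in> block u n e"
  shows "u e \<le> u q"
proof -
  have q: "1 \<le> q" "q \<le> e" and gap: "\<And>r. q \<le> r \<Longrightarrow> r < e \<Longrightarrow> \<not> rl_min u n r"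
    using \<open>q \<in> block u n e\<close> by (auto simp: block_def)
  obtain m where m: "m \<in> {q..n}" "rl_min u n m" and le: "\<And>i. i \<in> {q..n} \<Longrightarrow> u m \<le> u i"
    using ex_rl_min_argmin[OF u q(1) order_trans[OF q(2) e(1)]] by blast
  have "\<not> m < e"
    using gap m by auto
  moreover have "\<not> e < m"
    using e m le[of e] q unfolding rl_min_def by fastforce
  ultimately show ?thesis
    using le[of q] q e by (simp add: not_less_iff_gr_or_eq)
qed

lemma block_succ_in_block:
  assumes e: "rl_min u n e" and q: "q \<in> block u n e"
  shows "block_succ u n q \<in> block u n e"
proof (cases "rl_min u n q")
  case True
  then have "\<not> q < e"
    using q unfolding block_def by auto
  then have "q = e"
    using q unfolding block_def by auto
  then show ?thesis
    using True prev_rl_min_less[of e u n] not_rl_min_after_prev[of u n e] q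
    unfolding block_def block_succ_def by auto
next
  case False
  then have "q \<noteq> e"
    using e by auto
  then show ?thesis
    using False q unfolding block_def block_succ_def by auto
qed

lemma orbit_block_cycles_subset:
  assumes u: "u permutes {1..n}" and e: "e \<le> n" "rl_min u n e" and p: "p \<in> block u n e"
  shows "orbit (block_cycles u n) (u p) \<subseteq> u ` block u n e"
proof
  have sub: "block u n e \<subseteq> {1..n}"
    using e unfolding block_def by auto
  fix y assume "y \<in> orbit (block_cycles u n) (u p)"
  then show "y \<in> u ` block u n e"
  proof induction
    case base
    show ?case
      using block_cycles_apply[OF u, of p] p sub block_succ_in_block[OF e(2) p] by auto
  next
    case (step y)
    then obtain q where q: "q \<in> block u n e" "y = u q"
      by auto
    then show ?case
      using block_cycles_apply[OF u, of q] sub block_succ_in_block[OF e(2) q(1)] by auto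
  qed
qed

subsection \<open>Cycle spans and drops of the word\<close>

lemma cycles_span_le_block_cycles:
  assumes u: "u permutes {1..n}" and drops: "bounded_drops u n d"
  shows "cycles_span_le n (block_cycles u n) d"
  unfolding cycles_span_le_def
proof
  fix x assume x: "x \<in> {1..n}"
  define p where "p = inv u x"
  have p: "p \<in> {1..n}" "u p = x"
    using x permutes_in_image[OF permutes_inv[OF u]] permutes_inverses(1)[OF u] by (auto simp: p_def)
  then obtain e where e: "p \<le> e" "e \<le> n" "rl_min u n e" "\<forall>r. p \<le> r \<and> r < e \<longrightarrow> \<not> rl_min u n r"
    using ex_next_rl_min[of p n u] by auto
  then have "p \<in> block u n e"
    using p by (auto simp: block_def)
  define Orb where "Orb = orbit (block_cycles u n) x"
  have Orb_sub: "Orb \<subseteq> u ` block u n e"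
    using orbit_block_cycles_subset[OF u e(2,3) \<open>p \<in> block u n e\<close>] p by (simp add: Orb_def)
  have bounds: "u e \<le> y \<and> y \<le> u e + d" if "y \<in> Orb" for y
  proof -
    obtain q where q: "q \<in> block u n e" "y = u q"
      using Orb_sub \<open>y \<in> Orb\<close> by auto
    have "u q \<le> u e + d"
      using drops q e unfolding bounded_drops_def block_def by (cases "q = e") auto
    then show ?thesis
      using block_min[OF u e(2,3) q(1)] q by simp
  qed
  have fin: "finite Orb"
    using Orb_sub by (rule finite_subset) (auto simp: block_def)
  have ne: "Orb \<noteq> {}"
    by (simp add: Orb_def orbit_nonempty)
  show "Max (orbit (block_cycles u n) x) - Min (orbit (block_cycles u n) x) \<le> d"
    using bounds[OF Max_in[OF fin ne]] bounds[OF Min_in[OF fin ne]] unfolding Orb_def[symmetric]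
    by linarith
qed

lemma bounded_drops_if_cycles_span_le:
  assumes u: "u permutes {1..n}" and span: "cycles_span_le n (block_cycles u n) d"
  shows "bounded_drops u n d"
  unfolding bounded_drops_def
proof (intro ballI impI, rule ccontr)
  fix a b assume a: "a \<in> {1..n}" and b: "b \<in> {1..n}" and ab: "a < b" and drop: "\<not> u a \<le> u b + d"
  obtain e where e: "a \<le> e" "e \<le> n" "rl_min u n e" "\<forall>r. a \<le> r \<and> r < e \<longrightarrow> \<not> rl_min u n r"
    using ex_next_rl_min[of a n u] a by auto
  have walk: "(block_cycles u n ^^ i) (u a) = u (a + i)" if "a + i \<le> e" for i
    using that
  proof (induction i)
    case (Suc i)
    have "a + i \<in> {1..n}" "\<not> rl_min u n (a + i)"
      using Suc.prems a e by auto
    have "(block_cycles u n ^^ Suc i) (u a) = block_cycles u n (u (a + i))"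
      using Suc by simp
    also have "\<dots> = u (block_succ u n (a + i))"
      using block_cycles_apply[OF u \<open>a + i \<in> {1..n}\<close>] .
    also have "\<dots> = u (a + Suc i)"
      using \<open>\<not> rl_min u n (a + i)\<close> by (simp add: block_succ_def)
    finally show ?case .
  qed simp
  define c where "c = min b e"
  have c: "a \<le> c" "c \<le> e"
    using ab e by (auto simp: c_def)
  have "u c + d < u a"
  proof (cases "b \<le> e")
    case False
    then have "u e < u b"
      using e(3) b unfolding rl_min_def by auto
    then show ?thesis
      using drop False by (simp add: c_def)
  qed (use drop in \<open>simp add: c_def\<close>)
  have perm: "permutation (block_cycles u n)"
    using permutes_imp_permutation[OF _ block_cycles_permutes[OF u]] by simp
  define Orb where "Orb = orbit (block_cycles u n) (u a)"
  have a_in: "u a \<in> Orb"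
    unfolding Orb_def by (rule permutation_self_in_orbit[OF perm])
  have "u c = (block_cycles u n ^^ (c - a)) (u a)"
    using walk[of "c - a"] c by simp
  then have c_in: "u c \<in> Orb"
    unfolding Orb_def orbit_altdef_permutation[OF perm] by blast
  have fin: "finite Orb"
    unfolding Orb_def by (rule finite_orbit) (use a_in Orb_def in simp)
  have "Max Orb - Min Orb \<le> d"
    using span permutes_in_image[OF u] a unfolding cycles_span_le_def Orb_def by blast
  then show False
    using Max_ge[OF fin a_in] Min_le[OF fin c_in] \<open>u c + d < u a\<close> by linarith
qed

subsection \<open>Recovering the word from its block cycles\<close>

lemma permutes_image_tail:
  assumes u: "u permutes {1..n}" and j: "j \<le> n"
  shows "u ` {Suc j..n} = {1..n} - u ` {1..j}"
proof -
  have "{Suc j..n} = {1..n} - {1..j}"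
    using j by auto
  then show ?thesis
    using inj_on_image_set_diff[OF permutes_inj_on[OF u], of "{1..n}" "{1..j}"] permutes_image[OF u]
    by auto
qed

text \<open>The block starting at position j + 1 after a right-to-left minimum j ends at the position
  of the smallest remaining letter.\<close>

lemma next_letter_via_block_cycles:
  assumes u: "u permutes {1..n}" and j: "j < n"
  shows "u (Suc j) =
    block_cycles u n (if 1 \<le> j \<and> \<not> rl_min u n j then u j else Min (u ` {Suc j..n}))"
proof (cases "1 \<le> j \<and> \<not> rl_min u n j")
  case True
  then show ?thesis
    using block_cycles_apply[OF u, of j] j by (simp add: block_succ_def)
next
  case False
  obtain m where m: "m \<in> {Suc j..n}" "rl_min u n m" and le: "\<And>i. i \<in> {Suc j..n} \<Longrightarrow> u m \<le> u i"
    using ex_rl_min_argmin[OF u, of "Suc j"] j by auto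
  have "prev_rl_min u n m = j"
  proof (rule antisym)
    show "j \<le> prev_rl_min u n m"
      using False rl_min_le_prev_rl_min[of j m u n] m by (cases "j = 0") auto
    show "prev_rl_min u n m \<le> j"
    proof (rule ccontr)
      assume "\<not> prev_rl_min u n m \<le> j"
      then have p: "prev_rl_min u n m \<in> {Suc j..n}" "rl_min u n (prev_rl_min u n m)"
        "prev_rl_min u n m < m"
        using prev_rl_min_cases[of u n m] m by auto
      then show False
        using le[OF p(1)] m unfolding rl_min_def by fastforce
    qed
  qed
  then have "block_cycles u n (u m) = u (Suc j)"
    using block_cycles_apply[OF u, of m] m by (simp add: block_succ_def)
  moreover have "Min (u ` {Suc j..n}) = u m"
    using le m by (intro Min_eqI) auto
  ultimately show ?thesis
    using False by auto
qed

lemma block_cycles_inj: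
  assumes u1: "u1 permutes {1..n}" and u2: "u2 permutes {1..n}"
    and eq: "block_cycles u1 n = block_cycles u2 n"
  shows "u1 = u2"
proof -
  have prefix: "\<forall>i. 1 \<le> i \<and> i \<le> j \<longrightarrow> u1 i = u2 i" if "j \<le> n" for j
    using that
  proof (induction j)
    case (Suc j)
    then have IH: "\<forall>i. 1 \<le> i \<and> i \<le> j \<longrightarrow> u1 i = u2 i" and j: "j < n"
      by simp_all
    have "u1 ` {1..j} = u2 ` {1..j}"
      using IH by (intro image_cong) auto
    then have tail: "u1 ` {Suc j..n} = u2 ` {Suc j..n}"
      using permutes_image_tail[OF u1, of j] permutes_image_tail[OF u2, of j] j by simp
    have "rl_min u1 n j = rl_min u2 n j" if "1 \<le> j"
    proof -
      have "rl_min u n j = (\<forall>y \<in> u ` {Suc j..n}. u j < y)" for u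
        unfolding rl_min_def by auto
      moreover have "u1 j = u2 j"
        using IH that by simp
      ultimately show ?thesis
        by (simp only: tail)
    qed
    then have "u1 (Suc j) = u2 (Suc j)"
      using next_letter_via_block_cycles[OF u1 j] next_letter_via_block_cycles[OF u2 j] eq IH tail
      by (cases "1 \<le> j") auto
    then show ?case
      using IH by (metis le_Suc_eq)
  qed simp
  show ?thesis
  proof
    fix x
    show "u1 x = u2 x"
      using prefix[of n] permutes_not_in[OF u1, of x] permutes_not_in[OF u2, of x]
      by (cases "x \<in> {1..n}") auto
  qed
qed

lemma bij_betw_block_cycles:
  "bij_betw (\<lambda>u. block_cycles u n) {u. u permutes {1..n}} {\<sigma>. \<sigma> permutes {1..n}}"
proof -
  have "inj_on (\<lambda>u. block_cycles u n) {u. u permutes {1..n}}"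
    by (rule inj_onI) (auto intro: block_cycles_inj)
  moreover have "(\<lambda>u. block_cycles u n) ` {u. u permutes {1..n}} \<subseteq> {\<sigma>. \<sigma> permutes {1..n}}"
    using block_cycles_permutes by blast
  ultimately show ?thesis
    unfolding bij_betw_def by (simp add: endo_inj_surj finite_permutations)
qed

lemma card_bounded_drops_eq_card_cycles_span_le:
  "card {u. u permutes {1..n} \<and> bounded_drops u n d} =
   card {\<sigma>. \<sigma> permutes {1..n} \<and> cycles_span_le n \<sigma> d}"
proof (rule bij_betw_same_card, rule bij_betw_subset[OF bij_betw_block_cycles])
  have span_iff: "cycles_span_le n (block_cycles u n) d \<longleftrightarrow> bounded_drops u n d"
    if "u permutes {1..n}" for u
    using cycles_span_le_block_cycles bounded_drops_if_cycles_span_le that by blast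
  show "(\<lambda>u. block_cycles u n) ` {u. u permutes {1..n} \<and> bounded_drops u n d} =
        {\<sigma>. \<sigma> permutes {1..n} \<and> cycles_span_le n \<sigma> d}"
    using bij_betw_imp_surj_on[OF bij_betw_block_cycles[of n]] span_iff block_cycles_permutes
    by (fastforce simp: set_eq_iff image_iff)
qed auto

subsection \<open>The pattern 1 > k\<close>

lemma pop_contains_1k_iff:
  assumes k: "k \<ge> 2"
  shows "pop_contains n f k {(1, k)} \<longleftrightarrow>
    (\<exists>i\<in>{1..n}. \<exists>j\<in>{1..n}. i + (k - 1) \<le> j \<and> f j < f i)"
proof
  assume "pop_contains n f k {(1, k)}"
  then obtain idx where sm: "strict_mono_on {1..k} idx" and im: "idx ` {1..k} \<subseteq> {1..n}"
    and rel: "f (idx k) < f (idx 1)"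
    unfolding pop_contains_def by auto
  have grow: "idx 1 + (x - 1) \<le> idx x" if "1 \<le> x" "x \<le> k" for x
    using that
  proof (induction x)
    case (Suc x)
    then show ?case
      using strict_mono_onD[OF sm, of x "Suc x"] by (cases "x = 0") auto
  qed simp
  have "idx 1 \<in> {1..n}" "idx k \<in> {1..n}"
    using im k by (auto simp: image_subset_iff)
  moreover have "idx 1 + (k - 1) \<le> idx k"
    using grow[of k] k by simp
  ultimately show "\<exists>i\<in>{1..n}. \<exists>j\<in>{1..n}. i + (k - 1) \<le> j \<and> f j < f i"
    using rel by blast
next
  assume "\<exists>i\<in>{1..n}. \<exists>j\<in>{1..n}. i + (k - 1) \<le> j \<and> f j < f i"
  then obtain i j where ij: "i \<in> {1..n}" "j \<in> {1..n}" "i + (k - 1) \<le> j" "f j < f i"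
    by blast
  define idx where "idx x = (if x = k then j else i + x - 1)" for x
  have "strict_mono_on {1..k} idx"
    by (rule strict_mono_onI) (use ij in \<open>auto simp: idx_def\<close>)
  moreover have "idx ` {1..k} \<subseteq> {1..n}" "f (idx k) < f (idx 1)"
    using ij k by (auto simp: idx_def)
  ultimately show "pop_contains n f k {(1, k)}"
    unfolding pop_contains_def by blast
qed

lemma pop_avoids_1k_iff_bounded_drops_inv:
  assumes k: "k \<ge> 2" and f: "f permutes {1..n}"
  shows "pop_avoids n f k {(1, k)} \<longleftrightarrow> bounded_drops (inv f) n (k - 2)"
proof -
  have "bounded_drops (inv f) n (k - 2) \<longleftrightarrow>
      (\<forall>j\<in>{1..n}. \<forall>i\<in>{1..n}. f j < f i \<longrightarrow> inv f (f j) \<le> inv f (f i) + (k - 2))"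
    unfolding bounded_drops_def by (subst (1 2) permutes_image[OF f, symmetric]) simp
  also have "\<dots> \<longleftrightarrow> (\<forall>j\<in>{1..n}. \<forall>i\<in>{1..n}. \<not> (i + (k - 1) \<le> j \<and> f j < f i))"
    using k by (intro ball_cong refl) (auto simp: permutes_inverses(2)[OF f])
  also have "\<dots> \<longleftrightarrow> \<not> (\<exists>i\<in>{1..n}. \<exists>j\<in>{1..n}. i + (k - 1) \<le> j \<and> f j < f i)"
    by blast
  finally show ?thesis
    unfolding pop_avoids_def using pop_contains_1k_iff[OF k] by simp
qed

theorem theorem2p7:
  fixes k n :: nat
  assumes "k \<ge> 3"
  shows "card {f. f permutes {1..n} \<and> pop_avoids n f k {(1, k)}}
       = card {\<sigma>. \<sigma> permutes {1..n} \<and> cycles_span_le n \<sigma> (k - 2)}"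
proof -
  have avoids_iff: "pop_avoids n f k {(1, k)} \<longleftrightarrow> bounded_drops (inv f) n (k - 2)"
    if "f permutes {1..n}" for f
    using pop_avoids_1k_iff_bounded_drops_inv[OF _ that] assms by simp
  have "bij_betw inv {f. f permutes {1..n} \<and> pop_avoids n f k {(1, k)}}
                     {u. u permutes {1..n} \<and> bounded_drops u n (k - 2)}"
    by (rule bij_betw_byWitness[where f' = inv])
      (use avoids_iff permutes_inv permutes_inv_inv[of _ "{1..n}"] in auto)
  then have "card {f. f permutes {1..n} \<and> pop_avoids n f k {(1, k)}} =
             card {u. u permutes {1..n} \<and> bounded_drops u n (k - 2)}"
    by (rule bij_betw_same_card)
  also have "\<dots> = card {\<sigma>. \<sigma> permutes {1..n} \<and> cycles_span_le n \<sigma> (k - 2)}"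
    by (rule card_bounded_drops_eq_card_cycles_span_le)
  finally show ?thesis .
qed

end
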